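(* Let $(\bar x,\bar y)\in\mathbb{R}^2$, $n\ge 3$, and $a_k,b_k\in\mathbb{R}$ with $a_k^2+b_k^2\ne0$ for $k=1,\dots,n$, defining lines $l^k:=\{(x,y): a_k(x-\bar x)+b_k(y-\bar y)-1=0\}$ (none passes through $(\bar x,\bar y)$). Assume $$a_ib_{i^\oplus}-b_ia_{i^\oplus}>0\quad\text{for all } i\in\{1,\dots,n\},$$ and $$-a_k(b_i-b_j)+b_k(a_i-a_j)-(a_ib_j-b_ia_j)<0\quad\text{for all } i\in\{1,\dots,n\},\ j=i^{\oplus},\ k\in\{1,\dots,n\}\setminus\{i,j\}.$$ Let $S:=\{(x,y): a_k(x-\bar x)+b_k(y-\bar y)-1\le0\text{ for all }k\}$. Then the boundary of $S$ is an enclosed, non-degenerate, $n$-sided convex polygon containing $(\bar x,\bar y)$ in its interior, namely the closed polygon formed by the sequence $(V_{12},V_{23},\dots,V_{(n-1)n},V_{n1},V_{12})$ with $V_{ii^\oplus}:=l^i\cap l^{i^\oplus}$, whose $n$ vertices are pairwise distinct with no three cyclically consecutive ones collinear.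
   Context: For $i\in\{1,\dots,n\}$, $i^{\oplus}:=i+1$ if $i\le n-1$ and $n^{\oplus}:=1$. *)

theory Defs
  imports "HOL-Analysis.Analysis"
begin

definition cyc_succ :: "nat \<Rightarrow> nat \<Rightarrow> nat" where
  "cyc_succ n i = (if i \<le> n - 1 then i + 1 else 1)"

definition line_k :: "(nat \<Rightarrow> real) \<Rightarrow> (nat \<Rightarrow> real) \<Rightarrow> real \<Rightarrow> real \<Rightarrow> nat \<Rightarrow> (real \<times> real) set" where
  "line_k a b xb yb k = {(x, y). a k * (x - xb) + b k * (y - yb) - 1 = 0}"

definition region_S :: "nat \<Rightarrow> (nat \<Rightarrow> real) \<Rightarrow> (nat \<Rightarrow> real) \<Rightarrow> real \<Rightarrow> real \<Rightarrow> (real \<times> real) set" where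
  "region_S n a b xb yb = {(x, y). \<forall>k\<in>{1..n}. a k * (x - xb) + b k * (y - yb) - 1 \<le> 0}"

end

theory Submission
  imports Defs
begin

text \<open>Write \<open>f\<^sub>k(p) = a\<^sub>k (x - x\<^sub>0) + b\<^sub>k (y - y\<^sub>0)\<close>, so that \<open>S = {p. f\<^sub>k(p) \<le> 1 for all k}\<close>.
  The vertex \<open>V\<^sub>i\<close> is obtained from Cramer's rule, and the second hypothesis says precisely that
  \<open>f\<^sub>k(V\<^sub>i) < 1\<close> for \<open>k \<noteq> i, i\<^sup>\<oplus>\<close>. Consequently, on the line \<open>l\<^sup>k\<close> the two neighbouring
  constraints cut \<open>S\<close> down to the edge \<open>[V\<^sub>k\<^sub>-\<^sub>1, V\<^sub>k]\<close>. Both hypotheses together show that every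
  direction \<open>d \<noteq> 0\<close> has \<open>(a\<^sub>k, b\<^sub>k) \<bullet> d > 0\<close> for some \<open>k\<close>, so every line through a point of \<open>S\<close>
  leaves \<open>S\<close> in both directions through edges; hence \<open>S\<close> is the convex hull of the vertices.
  The frontier of \<open>S\<close> consists of the points of \<open>S\<close> where some constraint is tight, i.e. of
  the edges.\<close>

lemma cyc_succ_in_range: "i \<in> {1..n} \<Longrightarrow> cyc_succ n i \<in> {1..n}"
  by (auto simp: cyc_succ_def)

lemma cyc_succ_neq: "n \<ge> 2 \<Longrightarrow> i \<in> {1..n} \<Longrightarrow> cyc_succ n i \<noteq> i"
  by (auto simp: cyc_succ_def)

lemma cyc_succ_cyc_succ_neq: "n \<ge> 3 \<Longrightarrow> i \<in> {1..n} \<Longrightarrow> cyc_succ n (cyc_succ n i) \<noteq> i"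
  by (auto simp: cyc_succ_def)

lemma cyc_succ_surj_on:
  assumes "i \<in> {1..n}"
  obtains q where "q \<in> {1..n}" "cyc_succ n q = i"
proof (cases "i = 1")
  case True
  then show ?thesis using assms by (intro that[of n]) (auto simp: cyc_succ_def)
next
  case False
  then show ?thesis using assms by (intro that[of "i - 1"]) (auto simp: cyc_succ_def)
qed

locale half_planes =
  fixes a b :: "nat \<Rightarrow> real" and xb yb :: real
begin

definition form :: "nat \<Rightarrow> real \<times> real \<Rightarrow> real" where
  "form k p = a k * (fst p - xb) + b k * (snd p - yb)"

definition det :: "nat \<Rightarrow> nat \<Rightarrow> real" where
  "det i j = a i * b j - b i * a j"

definition vertex :: "nat \<Rightarrow> nat \<Rightarrow> real \<times> real" where
  "vertex i j = (xb + (b j - b i) / det i j, yb + (a i - a j) / det i j)"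

lemma region_S_eq: "region_S n a b xb yb = {p. \<forall>k\<in>{1..n}. form k p \<le> 1}"
  by (auto simp: region_S_def form_def)

lemma line_k_eq: "line_k a b xb yb k = {p. form k p = 1}"
  by (auto simp: line_k_def form_def)

lemma form_center [simp]: "form k (xb, yb) = 0"
  by (simp add: form_def)

lemma form_affine:
  assumes "u + v = 1"
  shows "form k (u *\<^sub>R p + v *\<^sub>R q) = u * form k p + v * form k q"
proof -
  have "form k (u *\<^sub>R p + v *\<^sub>R q) = u * form k p + v * form k q - (1 - u - v) * (a k * xb + b k * yb)"
    by (simp add: form_def algebra_simps)
  with assms show ?thesis by simp
qed

lemma form_add_scaleR: "form k (p + t *\<^sub>R d) = form k p + t * (a k * fst d + b k * snd d)"
  by (simp add: form_def algebra_simps)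

lemma form_vertex: "form k (vertex i j) = (a k * (b j - b i) + b k * (a i - a j)) / det i j"
  by (simp add: form_def vertex_def add_divide_distrib)

lemma vertex_on_lines:
  assumes "det i j \<noteq> 0"
  shows "form i (vertex i j) = 1" "form j (vertex i j) = 1"
  using assms by (simp_all add: form_vertex det_def field_simps)

lemma lines_inter_eq_vertex:
  assumes "det i j \<noteq> 0"
  shows "line_k a b xb yb i \<inter> line_k a b xb yb j = {vertex i j}"
proof -
  have "p = vertex i j" if "form i p = 1" "form j p = 1" for p
  proof -
    obtain x y where p: "p = (x, y)" by fastforce
    have "(x - xb) * det i j = b j * form i p - b i * form j p"
      and "(y - yb) * det i j = a i * form j p - a j * form i p"
      by (simp_all add: p form_def det_def algebra_simps)
    then have "x - xb = (b j - b i) / det i j" "y - yb = (a i - a j) / det i j"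
      using that assms by (simp_all add: eq_divide_eq)
    then show ?thesis by (simp add: p vertex_def)
  qed
  with vertex_on_lines[OF assms] show ?thesis unfolding line_k_eq by blast
qed

lemma form_closed_segment:
  assumes "p \<in> closed_segment P Q" "form k P = c" "form k Q = c"
  shows "form k p = c"
proof -
  obtain u where "p = (1 - u) *\<^sub>R P + u *\<^sub>R Q" using assms(1) by (auto simp: closed_segment_def)
  then have "form k p = (1 - u) * form k P + u * form k Q" by (simp add: form_affine)
  then show ?thesis using assms(2,3) by (simp add: algebra_simps)
qed

lemma not_collinear_off_line:
  assumes "form k P = 1" "form k Q = 1" "form k R < 1" "P \<noteq> Q"
  shows "\<not> collinear {P, Q, R}"
proof
  assume "collinear {P, Q, R}"
  then have "collinear {P, R, Q}" by (simp add: insert_commute)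
  then obtain u where "R = u *\<^sub>R P + (1 - u) *\<^sub>R Q"
    using \<open>P \<noteq> Q\<close> unfolding collinear_3_expand by blast
  then have "form k R = 1" using assms(1,2) by (simp add: form_affine)
  with assms(3) show False by simp
qed

lemma line_difference_parallel:
  assumes "(a k)\<^sup>2 + (b k)\<^sup>2 \<noteq> 0" "form k P = form k Q"
  obtains u where "P - Q = u *\<^sub>R (b k, - a k)"
proof
  define X Y N where "X = fst P - fst Q" and "Y = snd P - snd Q" and "N = (a k)\<^sup>2 + (b k)\<^sup>2"
  have orth: "a k * X + b k * Y = 0"
    using assms(2) by (simp add: form_def X_def Y_def algebra_simps)
  have "(b k * X - a k * Y) * b k = X * N - a k * (a k * X + b k * Y)"
    and "(b k * X - a k * Y) * - a k = Y * N - b k * (a k * X + b k * Y)"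
    by (simp_all add: N_def power2_eq_square algebra_simps)
  with orth assms(1) show "P - Q = ((b k * X - a k * Y) / N) *\<^sub>R (b k, - a k)"
    by (simp add: prod_eq_iff X_def Y_def N_def field_simps)
qed

lemma on_line_affine_combination:
  assumes "(a k)\<^sup>2 + (b k)\<^sup>2 \<noteq> 0" "form k p = form k P" "form k Q = form k P" "P \<noteq> Q"
  obtains t where "p = (1 - t) *\<^sub>R P + t *\<^sub>R Q"
proof -
  obtain \<alpha> where \<alpha>: "p - P = \<alpha> *\<^sub>R (b k, - a k)" using line_difference_parallel assms(1,2) .
  obtain \<beta> where \<beta>: "Q - P = \<beta> *\<^sub>R (b k, - a k)" using line_difference_parallel assms(1,3) .
  have "\<beta> \<noteq> 0"
  proof
    assume "\<beta> = 0"
    with \<beta> have "Q - P = 0" by (simp add: zero_prod_def)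
    with \<open>P \<noteq> Q\<close> show False by simp
  qed
  with \<alpha> \<beta> have "p - P = (\<alpha> / \<beta>) *\<^sub>R (Q - P)" by simp
  then have "p = (1 - \<alpha> / \<beta>) *\<^sub>R P + (\<alpha> / \<beta>) *\<^sub>R Q" by (simp add: algebra_simps)
  then show ?thesis by (rule that)
qed

lemma convex_region_S: "convex (region_S n a b xb yb)"
proof -
  have "region_S n a b xb yb = (\<Inter>k\<in>{1..n}. {p. (a k, b k) \<bullet> p \<le> 1 + a k * xb + b k * yb})"
    by (auto simp: region_S_eq form_def inner_Pair algebra_simps)
  then show ?thesis by (simp add: convex_INT convex_halfspace_le)
qed

lemma closed_region_S: "closed (region_S n a b xb yb)"
proof -
  have "region_S n a b xb yb = (\<Inter>k\<in>{1..n}. {p. form k p \<le> 1})" by (auto simp: region_S_eq)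
  moreover have "closed {p. form k p \<le> 1}" for k
    unfolding form_def by (intro closed_Collect_le continuous_intros)
  ultimately show ?thesis by auto
qed

lemma interior_region_S:
  assumes "\<forall>k\<in>{1..n}. (a k)\<^sup>2 + (b k)\<^sup>2 \<noteq> 0"
  shows "interior (region_S n a b xb yb) = {p. \<forall>k\<in>{1..n}. form k p < 1}"
proof
  have "open {p. form k p < 1}" for k
    unfolding form_def by (intro open_Collect_less continuous_intros)
  then have "open {p. \<forall>k\<in>{1..n}. form k p < 1}" by (auto simp: Collect_ball_eq)
  then show "{p. \<forall>k\<in>{1..n}. form k p < 1} \<subseteq> interior (region_S n a b xb yb)"
    by (rule interior_maximal[rotated]) (auto simp: region_S_eq)
next
  show "interior (region_S n a b xb yb) \<subseteq> {p. \<forall>k\<in>{1..n}. form k p < 1}"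
  proof (safe, rule ccontr)
    fix p k assume p: "p \<in> interior (region_S n a b xb yb)" and k: "k \<in> {1..n}"
      and not_less: "\<not> form k p < 1"
    obtain e where e: "e > 0" "ball p e \<subseteq> region_S n a b xb yb"
      using p by (auto simp: mem_interior)
    define w where "w = (a k, b k)"
    have "w \<noteq> 0" using assms k by (auto simp: w_def zero_prod_def)
    define t where "t = e / (2 * norm w)"
    have t: "t > 0" using e \<open>w \<noteq> 0\<close> by (simp add: t_def)
    have "dist p (p + t *\<^sub>R w) = e / 2" using \<open>w \<noteq> 0\<close> e(1) by (simp add: dist_norm t_def)
    then have "p + t *\<^sub>R w \<in> region_S n a b xb yb" using e by auto
    then have "form k (p + t *\<^sub>R w) \<le> 1" using k by (simp add: region_S_eq)
    moreover have "form k (p + t *\<^sub>R w) = form k p + t * ((a k)\<^sup>2 + (b k)\<^sup>2)"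
      unfolding form_add_scaleR by (simp add: w_def power2_eq_square)
    moreover have "t * ((a k)\<^sup>2 + (b k)\<^sup>2) > 0" using t assms k by (simp add: sum_power2_gt_zero_iff)
    ultimately show False using not_less by linarith
  qed
qed

lemma frontier_region_S:
  assumes "\<forall>k\<in>{1..n}. (a k)\<^sup>2 + (b k)\<^sup>2 \<noteq> 0"
  shows "frontier (region_S n a b xb yb) = {p \<in> region_S n a b xb yb. \<exists>k\<in>{1..n}. form k p = 1}"
  using closed_region_S interior_region_S[OF assms]
  by (force simp: frontier_def region_S_eq)

end

locale cyclic_half_planes = half_planes +
  fixes n :: nat
  assumes n_ge_3: "n \<ge> 3"
    and normal_nonzero: "\<forall>k\<in>{1..n}. (a k)\<^sup>2 + (b k)\<^sup>2 \<noteq> 0"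
    and turning: "\<forall>i\<in>{1..n}. a i * b (cyc_succ n i) - b i * a (cyc_succ n i) > 0"
    and vertex_condition: "\<forall>i\<in>{1..n}. \<forall>k\<in>{1..n} - {i, cyc_succ n i}.
           let j = cyc_succ n i in
           - a k * (b i - b j) + b k * (a i - a j) - (a i * b j - b i * a j) < 0"
begin

abbreviation s :: "nat \<Rightarrow> nat" where "s \<equiv> cyc_succ n"

abbreviation S :: "(real \<times> real) set" where "S \<equiv> region_S n a b xb yb"

definition V :: "nat \<Rightarrow> real \<times> real" where "V i = vertex i (s i)"

lemma s_in_range: "i \<in> {1..n} \<Longrightarrow> s i \<in> {1..n}"
  by (rule cyc_succ_in_range)

lemma s_neq: "i \<in> {1..n} \<Longrightarrow> s i \<noteq> i"
  using n_ge_3 by (simp add: cyc_succ_neq)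

lemma s_s_neq: "i \<in> {1..n} \<Longrightarrow> s (s i) \<noteq> i"
  using n_ge_3 by (rule cyc_succ_cyc_succ_neq)

lemma det_succ_pos: "i \<in> {1..n} \<Longrightarrow> det i (s i) > 0"
  using turning by (simp add: det_def)

lemma form_V_eq_1:
  assumes "i \<in> {1..n}"
  shows "form i (V i) = 1" "form (s i) (V i) = 1"
  using vertex_on_lines det_succ_pos[OF assms] by (simp_all add: V_def)

lemma vertex_condition_det:
  assumes "i \<in> {1..n}" "k \<in> {1..n}" "k \<noteq> i" "k \<noteq> s i"
  shows "a k * (b (s i) - b i) + b k * (a i - a (s i)) < det i (s i)"
proof -
  have "k \<in> {1..n} - {i, s i}" using assms by simp
  from vertex_condition[rule_format, OF assms(1) this]
  show ?thesis by (simp add: Let_def det_def algebra_simps)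
qed

lemma lines_inter_eq_V: "i \<in> {1..n} \<Longrightarrow> line_k a b xb yb i \<inter> line_k a b xb yb (s i) = {V i}"
  using lines_inter_eq_vertex det_succ_pos by (simp add: V_def less_imp_neq[symmetric])

lemma form_V_less_1:
  assumes "i \<in> {1..n}" "k \<in> {1..n}" "k \<noteq> i" "k \<noteq> s i"
  shows "form k (V i) < 1"
  using vertex_condition_det[OF assms] det_succ_pos[OF assms(1)] by (simp add: V_def form_vertex)

lemma V_in_region:
  assumes "i \<in> {1..n}"
  shows "V i \<in> S"
proof -
  have "form k (V i) \<le> 1" if "k \<in> {1..n}" for k
    using form_V_eq_1[OF assms] form_V_less_1[OF assms that] by (cases "k = i \<or> k = s i") auto
  then show ?thesis by (simp add: region_S_eq)
qed

lemma hull_subset_region: "convex hull (V ` {1..n}) \<subseteq> S"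
  using convex_region_S V_in_region by (intro hull_minimal) auto

lemma edge_subset_hull:
  assumes "i \<in> {1..n}"
  shows "closed_segment (V i) (V (s i)) \<subseteq> convex hull (V ` {1..n})"
proof -
  have "{V i, V (s i)} \<subseteq> V ` {1..n}" using assms s_in_range[OF assms] by blast
  then show ?thesis unfolding segment_convex_hull by (rule hull_mono)
qed

text \<open>Let \<open>m\<close> maximise \<open>g\<^sub>k = (a\<^sub>k, b\<^sub>k) \<bullet> d\<close>, with cyclic neighbours \<open>q\<close> and \<open>r\<close>. In the identity
  \<open>C g\<^sub>m = det(m,r) (g\<^sub>m - g\<^sub>q) + det(q,m) (g\<^sub>m - g\<^sub>r)\<close> all three coefficients are positive
  (\<open>C = det(q,m) (1 - f\<^sub>r(V\<^sub>q))\<close>), so \<open>g\<^sub>m \<le> 0\<close> would force \<open>g\<^sub>m = g\<^sub>q = 0\<close>, i.e. \<open>d = 0\<close>.\<close>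

lemma exists_positive_form_direction:
  assumes "d \<noteq> 0"
  shows "\<exists>k\<in>{1..n}. a k * fst d + b k * snd d > 0"
proof (rule ccontr)
  assume no_positive: "\<not> ?thesis"
  define g where "g k = a k * fst d + b k * snd d" for k
  have g_nonpos: "g k \<le> 0" if "k \<in> {1..n}" for k
    using no_positive that by (auto simp: g_def not_less)
  have "{1..n} \<noteq> {}" using n_ge_3 by auto
  then have "Max (g ` {1..n}) \<in> g ` {1..n}" by (intro Max_in) auto
  then obtain m where m: "m \<in> {1..n}" "g m = Max (g ` {1..n})" by (auto elim!: imageE)
  then have max: "g k \<le> g m" if "k \<in> {1..n}" for k using that by simp
  obtain q where q: "q \<in> {1..n}" "s q = m" using cyc_succ_surj_on[OF m(1)] .
  define r where "r = s m"
  have r: "r \<in> {1..n}" "r \<noteq> m" "r \<noteq> q"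
    using s_in_range s_neq s_s_neq m(1) q by (auto simp: r_def)
  define C where "C = det q m - (a r * (b m - b q) + b r * (a q - a m))"
  have "C > 0" using vertex_condition_det[of q r] q r by (simp add: C_def)
  have Pq: "det q m > 0" and Pm: "det m r > 0"
    using det_succ_pos q m(1) by (auto simp: r_def)
  have identity: "C * g m = det m r * (g m - g q) + det q m * (g m - g r)"
    by (simp add: C_def det_def g_def algebra_simps)
  have "det m r * (g m - g q) \<ge> 0" "det q m * (g m - g r) \<ge> 0"
    using Pq Pm max q(1) r(1) by simp_all
  moreover have "C * g m \<le> 0" using \<open>C > 0\<close> g_nonpos m(1) by (simp add: mult_nonneg_nonpos)
  ultimately have "C * g m = 0" "det m r * (g m - g q) = 0" using identity by linarith+
  then have "g m = 0" "g q = 0" using \<open>C > 0\<close> Pm by simp_all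
  moreover have "fst d * det q m = b m * g q - b q * g m" "snd d * det q m = a q * g m - a m * g q"
    by (simp_all add: det_def g_def algebra_simps)
  ultimately have "d = 0" using Pq by (simp add: prod_eq_iff)
  with assms show False ..
qed

text \<open>The ray leaves \<open>S\<close> at the least hitting time \<open>(1 - f\<^sub>k(p)) / g\<^sub>k\<close> among the constraints with
  \<open>g\<^sub>k > 0\<close>.\<close>

lemma exit_point:
  assumes "p \<in> S" "d \<noteq> 0"
  obtains t k where "t \<ge> 0" "k \<in> {1..n}" "p + t *\<^sub>R d \<in> S" "form k (p + t *\<^sub>R d) = 1"
proof -
  define g where "g k = a k * fst d + b k * snd d" for k
  define K where "K = {k \<in> {1..n}. g k > 0}"
  define h where "h k = (1 - form k p) / g k" for k
  have "K \<noteq> {}" using exists_positive_form_direction[OF assms(2)] by (auto simp: K_def g_def)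
  moreover have "finite K" by (simp add: K_def)
  ultimately have "Min (h ` K) \<in> h ` K" by (intro Min_in) auto
  then obtain m where m: "m \<in> K" "h m = Min (h ` K)" by (auto elim!: imageE)
  define t where "t = h m"
  have t_le: "t \<le> h k" if "k \<in> K" for k
    using \<open>finite K\<close> that by (simp add: t_def m(2))
  have form_p: "form k p \<le> 1" if "k \<in> {1..n}" for k
    using assms(1) that by (simp add: region_S_eq)
  have form_ray: "form k (p + t *\<^sub>R d) = form k p + t * g k" for k
    by (simp add: form_add_scaleR g_def)
  have h_mult: "h k * g k = 1 - form k p" if "k \<in> K" for k
    using that by (simp add: h_def K_def)
  have "m \<in> {1..n}" using m(1) by (simp add: K_def)
  have "t \<ge> 0" using m(1) form_p by (simp add: t_def h_def K_def)
  have "form m (p + t *\<^sub>R d) = 1"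
    using form_ray[of m] h_mult[OF m(1)] unfolding t_def by linarith
  moreover have "form k (p + t *\<^sub>R d) \<le> 1" if k: "k \<in> {1..n}" for k
  proof (cases "k \<in> K")
    case True
    then have "t * g k \<le> h k * g k" using t_le[OF True] by (simp add: K_def)
    then show ?thesis using form_ray[of k] h_mult[OF True] by linarith
  next
    case False
    then have "g k \<le> 0" using k by (simp add: K_def)
    with \<open>t \<ge> 0\<close> have "t * g k \<le> 0" by (rule mult_nonneg_nonpos)
    then show ?thesis using form_ray[of k] form_p[OF k] by linarith
  qed
  then have "p + t *\<^sub>R d \<in> S" by (simp add: region_S_eq)
  ultimately show ?thesis using that \<open>t \<ge> 0\<close> \<open>m \<in> {1..n}\<close> by blast
qed

text \<open>On the line \<open>l\<^sup>k\<close>, \<open>k = s q\<close>, the constraints \<open>q\<close> and \<open>s k\<close> are tight at the ends \<open>V q\<close>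
  and \<open>V k\<close> respectively and strict at the other end, so they confine \<open>p\<close> to the segment.\<close>

lemma region_on_line_in_edge:
  assumes q: "q \<in> {1..n}" and p: "p \<in> S" "form (s q) p = 1"
  shows "p \<in> closed_segment (V q) (V (s q))"
proof -
  define k where "k = s q"
  define r where "r = s k"
  have k: "k \<in> {1..n}" and "q \<noteq> k" using s_in_range[OF q] s_neq[OF q] by (auto simp: k_def)
  have r: "r \<in> {1..n}" "r \<noteq> k" "r \<noteq> q"
    using s_in_range[OF k] s_neq[OF k] s_s_neq[OF q] by (auto simp: k_def r_def)
  have A_on: "form k (V q) = 1" "form q (V q) = 1" and B_on: "form k (V k) = 1" "form r (V k) = 1"
    using form_V_eq_1 q k by (auto simp: k_def r_def)
  have A_off: "form r (V q) < 1" and B_off: "form q (V k) < 1"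
    using form_V_less_1 q k r \<open>q \<noteq> k\<close> s_s_neq[OF q] by (auto simp: k_def r_def)
  have "(a k)\<^sup>2 + (b k)\<^sup>2 \<noteq> 0" using normal_nonzero k by blast
  moreover have "form k p = form k (V q)" "form k (V k) = form k (V q)"
    using p(2) A_on B_on by (simp_all add: k_def)
  moreover have "V q \<noteq> V k" using A_off B_on by auto
  ultimately obtain t where t: "p = (1 - t) *\<^sub>R V q + t *\<^sub>R V k"
    by (rule on_line_affine_combination)
  have form_p: "form j p = (1 - t) * form j (V q) + t * form j (V k)" for j
    unfolding t by (rule form_affine) simp
  have "form r p \<le> 1" "form q p \<le> 1" using p(1) q r(1) by (auto simp: region_S_eq)
  then have "(1 - t) * (1 - form r (V q)) \<ge> 0" "t * (1 - form q (V k)) \<ge> 0"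
    using A_on B_on by (simp_all add: form_p algebra_simps)
  then have "0 \<le> t" "t \<le> 1" using A_off B_off by (simp_all add: zero_le_mult_iff)
  then show ?thesis using t by (auto simp: closed_segment_def k_def)
qed

lemma region_on_line_in_hull:
  assumes "p \<in> S" "k \<in> {1..n}" "form k p = 1"
  shows "p \<in> convex hull (V ` {1..n})"
proof -
  obtain q where "q \<in> {1..n}" "s q = k" using cyc_succ_surj_on[OF assms(2)] .
  then show ?thesis using region_on_line_in_edge edge_subset_hull assms by blast
qed

text \<open>A point of \<open>S\<close> lies between the two exit points of a line through it.\<close>

lemma region_subset_hull: "S \<subseteq> convex hull (V ` {1..n})"
proof
  fix p assume p: "p \<in> S"
  define d :: "real \<times> real" where "d = (1, 0)"
  have "d \<noteq> 0" "- d \<noteq> 0" by (simp_all add: d_def zero_prod_def)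
  obtain t1 k1 where "t1 \<ge> 0" "k1 \<in> {1..n}" "p + t1 *\<^sub>R d \<in> S" "form k1 (p + t1 *\<^sub>R d) = 1"
    using exit_point[OF p \<open>d \<noteq> 0\<close>] .
  then have t1: "t1 \<ge> 0" "p + t1 *\<^sub>R d \<in> convex hull (V ` {1..n})"
    using region_on_line_in_hull by blast+
  obtain t2 k2 where "t2 \<ge> 0" "k2 \<in> {1..n}" "p + t2 *\<^sub>R - d \<in> S" "form k2 (p + t2 *\<^sub>R - d) = 1"
    using exit_point[OF p \<open>- d \<noteq> 0\<close>] .
  then have t2: "t2 \<ge> 0" "p + t2 *\<^sub>R - d \<in> convex hull (V ` {1..n})"
    using region_on_line_in_hull by blast+
  show "p \<in> convex hull (V ` {1..n})"
  proof (cases "t1 + t2 = 0")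
    case True
    then have "t1 = 0" using t1(1) t2(1) by linarith
    then show ?thesis using t1(2) by simp
  next
    case False
    define u where "u = t1 / (t1 + t2)"
    have u: "0 \<le> u" "u \<le> 1" using t1(1) t2(1) False by (simp_all add: u_def)
    have "(1 - u) * t1 = u * t2" using False by (simp add: u_def field_simps)
    moreover have "(1 - u) *\<^sub>R (p + t1 *\<^sub>R d) + u *\<^sub>R (p + t2 *\<^sub>R - d)
        = p + ((1 - u) * t1 - u * t2) *\<^sub>R d"
      by (simp add: algebra_simps)
    ultimately have "p = (1 - u) *\<^sub>R (p + t1 *\<^sub>R d) + u *\<^sub>R (p + t2 *\<^sub>R - d)" by simp
    with u have "p \<in> closed_segment (p + t1 *\<^sub>R d) (p + t2 *\<^sub>R - d)"
      by (auto simp: closed_segment_def)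
    with t1(2) t2(2) show ?thesis by (meson closed_segment_subset convex_convex_hull subsetD)
  qed
qed

lemma region_eq_hull: "S = convex hull (V ` {1..n})"
  using region_subset_hull hull_subset_region by (rule subset_antisym)

lemma frontier_eq_edges: "frontier S = (\<Union>i\<in>{1..n}. closed_segment (V i) (V (s i)))"
proof
  show "frontier S \<subseteq> (\<Union>i\<in>{1..n}. closed_segment (V i) (V (s i)))"
  proof
    fix p assume "p \<in> frontier S"
    then obtain k where p: "p \<in> S" and k: "k \<in> {1..n}" "form k p = 1"
      by (auto simp: frontier_region_S[OF normal_nonzero])
    obtain q where "q \<in> {1..n}" "s q = k" using cyc_succ_surj_on[OF k(1)] .
    then show "p \<in> (\<Union>i\<in>{1..n}. closed_segment (V i) (V (s i)))"
      using region_on_line_in_edge p k by blast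
  qed
next
  show "(\<Union>i\<in>{1..n}. closed_segment (V i) (V (s i))) \<subseteq> frontier S"
  proof safe
    fix i p assume i: "i \<in> {1..n}" and p: "p \<in> closed_segment (V i) (V (s i))"
    have "p \<in> S" using p edge_subset_hull[OF i] hull_subset_region by blast
    moreover have "form (s i) p = 1"
      using form_closed_segment[OF p] form_V_eq_1 i s_in_range by blast
    ultimately show "p \<in> frontier S"
      using i s_in_range by (auto simp: frontier_region_S[OF normal_nonzero])
  qed
qed

lemma inj_on_V: "inj_on V {1..n}"
proof
  fix i j assume i: "i \<in> {1..n}" and j: "j \<in> {1..n}" and eq: "V i = V j"
  show "i = j"
  proof (rule ccontr)
    assume "i \<noteq> j"
    have "form i (V j) = 1" "form j (V i) = 1" using eq form_V_eq_1 i j by metis+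
    then have "i = s j" "j = s i" using form_V_less_1 i j \<open>i \<noteq> j\<close> by force+
    then show False using s_s_neq[OF i] by simp
  qed
qed

lemma V_not_collinear:
  assumes i: "i \<in> {1..n}"
  shows "\<not> collinear {V i, V (s i), V (s (s i))}"
proof (rule not_collinear_off_line)
  have j: "s i \<in> {1..n}" and l: "s (s i) \<in> {1..n}" using s_in_range i by blast+
  show "form (s i) (V i) = 1" "form (s i) (V (s i)) = 1" using form_V_eq_1 i j by simp_all
  show "form (s i) (V (s (s i))) < 1"
    using form_V_less_1[OF l j] s_neq[OF j] s_s_neq[OF j] by auto
  show "V i \<noteq> V (s i)" using inj_onD[OF inj_on_V _ i j] s_neq[OF i] by auto
qed

lemma center_in_interior: "(xb, yb) \<in> interior S"
  by (simp add: interior_region_S[OF normal_nonzero])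

end

theorem corollary1:
  fixes n :: nat and a b :: "nat \<Rightarrow> real" and xb yb :: real
  assumes "n \<ge> 3"
    and "\<forall>k\<in>{1..n}. (a k)\<^sup>2 + (b k)\<^sup>2 \<noteq> 0"
    and "\<forall>i\<in>{1..n}. a i * b (cyc_succ n i) - b i * a (cyc_succ n i) > 0"
    and "\<forall>i\<in>{1..n}. \<forall>k\<in>{1..n} - {i, cyc_succ n i}.
           let j = cyc_succ n i in
           - a k * (b i - b j) + b k * (a i - a j) - (a i * b j - b i * a j) < 0"
  shows "\<exists>V :: nat \<Rightarrow> real \<times> real.
           (\<forall>i\<in>{1..n}. line_k a b xb yb i \<inter> line_k a b xb yb (cyc_succ n i) = {V i})
         \<and> inj_on V {1..n}
         \<and> (\<forall>i\<in>{1..n}. \<not> collinear {V i, V (cyc_succ n i), V (cyc_succ n (cyc_succ n i))})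
         \<and> frontier (region_S n a b xb yb) = (\<Union>i\<in>{1..n}. closed_segment (V i) (V (cyc_succ n i)))
         \<and> region_S n a b xb yb = convex hull (V ` {1..n})
         \<and> (xb, yb) \<in> interior (region_S n a b xb yb)"
proof -
  interpret cyclic_half_planes a b xb yb n
    using assms by unfold_locales
  show ?thesis
    using lines_inter_eq_V inj_on_V V_not_collinear frontier_eq_edges region_eq_hull center_in_interior
    by blast
qed

end
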